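(* Let $d$ be a positive integer and let $A \in \mathbb{R}^{[m]\times[n]}$. Suppose that for every vector $b\in\mathbb{R}^{[m]}$ the solution graph $G(R(A,b))$ is connected. If $m\le 3$ or $n\le 2$, then $A$ has an elimination ordering.
   Context: Fix a positive integer $d$ and let $D=\{0,1,\dots,d\}$; $[n]=\{1,\dots,n\}$. For $A\in\mathbb{R}^{[m]\times[n]}$ and $b\in\mathbb{R}^{[m]}$, $R(A,b)=\{x\in D^{[n]} : Ax\ge b\}$. For $R\subseteq D^{[n]}$, the solution graph $G(R)$ is the undirected graph with vertex set $R$ in which $x,y$ are adjacent iff they differ in exactly one coordinate. A matrix $A=(a_{ij})$ with column index set $J$ can be eliminated at column $j\in J$ if (i) for every row $i$ with $a_{ij}>0$ we have $a_{ij'}=0$ for all $j'\in J\setminus\{j\}$, or (ii) for every row $i$ with $a_{ij}<0$ we have $a_{ij'}=0$ for all $j'\in J\setminus\{j\}$. For $J'\subseteq[n]$, $\mathrm{elm}(A,J')$ is the submatrix of $A$ obtained by deleting the columns indexed by $J'$. A sequence $(j_1,\dots,j_n)$ of the elements of $[n]$ is an elimination ordering (EO) of $A$ if for every $t\in[n]$ the matrix $\mathrm{elm}(A,\{j_1,\dots,j_{t-1}\})$ can be eliminated at column $j_t$. *)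

theory Defs
  imports Complex_Main
begin

text \<open>Index sets are [m] = {1..m}, [n] = {1..n}. A matrix A in R^([m]x[n]) is a function
  A :: nat => nat => real, of which only the entries A i j with i in [m], j in [n] matter.
  Points of D^[n] are functions x :: nat => int with x j in {0..d} for j in [n] and
  x j = 0 (a canonical default) for j outside [n].\<close>

definition box :: "nat \<Rightarrow> nat \<Rightarrow> (nat \<Rightarrow> int) set" where
  "box d n = {x. (\<forall>j\<in>{1..n}. x j \<in> {0..int d}) \<and> (\<forall>j. j \<notin> {1..n} \<longrightarrow> x j = 0)}"

definition solset :: "nat \<Rightarrow> nat \<Rightarrow> nat \<Rightarrow> (nat \<Rightarrow> nat \<Rightarrow> real) \<Rightarrow> (nat \<Rightarrow> real)
    \<Rightarrow> (nat \<Rightarrow> int) set" where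
  "solset d m n A b = {x \<in> box d n. \<forall>i\<in>{1..m}. (\<Sum>j=1..n. A i j * of_int (x j)) \<ge> b i}"

definition adjacent :: "nat \<Rightarrow> (nat \<Rightarrow> int) \<Rightarrow> (nat \<Rightarrow> int) \<Rightarrow> bool" where
  "adjacent n x y \<longleftrightarrow> card {j\<in>{1..n}. x j \<noteq> y j} = 1"

text \<open>G(R) is connected: any two vertices are joined by a walk inside R.
  (The empty graph counts as connected.)\<close>
definition sol_graph_connected :: "nat \<Rightarrow> (nat \<Rightarrow> int) set \<Rightarrow> bool" where
  "sol_graph_connected n R \<longleftrightarrow>
     (\<forall>x\<in>R. \<forall>y\<in>R. (x, y) \<in> ({(u, v). u \<in> R \<and> v \<in> R \<and> adjacent n u v})\<^sup>*)"

definition can_elim :: "nat \<Rightarrow> (nat \<Rightarrow> nat \<Rightarrow> real) \<Rightarrow> nat set \<Rightarrow> nat \<Rightarrow> bool" where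
  "can_elim m A J j \<longleftrightarrow>
     (\<forall>i\<in>{1..m}. A i j > 0 \<longrightarrow> (\<forall>j'\<in>J - {j}. A i j' = 0)) \<or>
     (\<forall>i\<in>{1..m}. A i j < 0 \<longrightarrow> (\<forall>j'\<in>J - {j}. A i j' = 0))"

definition elimination_ordering :: "nat \<Rightarrow> nat \<Rightarrow> (nat \<Rightarrow> nat \<Rightarrow> real) \<Rightarrow> nat list \<Rightarrow> bool" where
  "elimination_ordering m n A js \<longleftrightarrow>
     distinct js \<and> set js = {1..n} \<and>
     (\<forall>t<n. can_elim m A ({1..n} - set (take t js)) (js ! t))"

end

theory Submission
  imports Defs
begin

text \<open>Consider slices of the solution set: the columns in a set \<open>J\<close> are free, the others are fixed.
  If some column \<open>j \<in> J\<close> can be eliminated, one end \<open>v\<close> of \<open>{0..d}\<close> is best for every row that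
  meets another column of \<open>J\<close>, and \<open>x \<mapsto> x(j := v)\<close> retracts the slice onto the smaller slice with
  \<open>x j = v\<close>, mapping edges to edges or loops; so connectivity of all slices is inherited and we
  recurse. If no column of \<open>J\<close> can be eliminated, the sign pattern of \<open>A\<close> (here \<open>m \<le> 3\<close> or
  \<open>n \<le> 2\<close> is needed) provides signs \<open>s\<close> and columns \<open>T\<close> such that, for a suitable \<open>b\<close>, the
  corner \<open>p\<close> of the box selected by \<open>s\<close> and the point \<open>p + s\<close> on \<open>T\<close> are solutions while
  no neighbour of \<open>p\<close> is: the slice is disconnected.\<close>

section \<open>Slices of the solution set\<close>

definition row_val :: "nat \<Rightarrow> (nat \<Rightarrow> nat \<Rightarrow> real) \<Rightarrow> nat \<Rightarrow> (nat \<Rightarrow> int) \<Rightarrow> real" where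
  "row_val n A i x = (\<Sum>k=1..n. A i k * of_int (x k))"

definition slice :: "nat \<Rightarrow> nat \<Rightarrow> nat \<Rightarrow> (nat \<Rightarrow> nat \<Rightarrow> real) \<Rightarrow> (nat \<Rightarrow> real) \<Rightarrow> nat set
    \<Rightarrow> (nat \<Rightarrow> int) \<Rightarrow> (nat \<Rightarrow> int) set" where
  "slice d m n A b J c = {x \<in> solset d m n A b. \<forall>k\<in>{1..n} - J. x k = c k}"

lemma mem_slice_iff:
  "x \<in> slice d m n A b J c \<longleftrightarrow>
     x \<in> box d n \<and> (\<forall>i\<in>{1..m}. b i \<le> row_val n A i x) \<and> (\<forall>k\<in>{1..n} - J. x k = c k)"
  by (auto simp: slice_def solset_def row_val_def)

lemma slice_all_columns: "slice d m n A b {1..n} c = solset d m n A b"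
  by (auto simp: slice_def)

lemma row_val_cong:
  assumes "\<And>k. k \<in> {1..n} \<Longrightarrow> A i k \<noteq> 0 \<Longrightarrow> x k = y k"
  shows "row_val n A i x = row_val n A i y"
  unfolding row_val_def by (rule sum.cong) (use assms in auto)

lemma row_val_change_one:
  assumes "j \<in> {1..n}" and "\<forall>k\<in>{1..n} - {j}. y k = x k"
  shows "row_val n A i y = row_val n A i x + A i j * of_int (y j - x j)"
proof -
  have "row_val n A i y - row_val n A i x = (\<Sum>k=1..n. A i k * of_int (y k - x k))"
    by (simp add: row_val_def sum_subtractf[symmetric] algebra_simps)
  also have "\<dots> = (\<Sum>k\<in>{1..n}. if k = j then A i j * of_int (y j - x j) else 0)"
    by (rule sum.cong) (use assms(2) in auto)
  also have "\<dots> = A i j * of_int (y j - x j)"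
    using assms(1) by simp
  finally show ?thesis
    by simp
qed

lemma row_val_shift:
  assumes "T \<subseteq> {1..n}"
  shows "row_val n A i (\<lambda>k. if k \<in> T then x k + s k else x k) = row_val n A i x + (\<Sum>k\<in>T. of_int (s k) * A i k)"
proof -
  have "row_val n A i (\<lambda>k. if k \<in> T then x k + s k else x k) - row_val n A i x
      = (\<Sum>k\<in>{1..n}. if k \<in> T then of_int (s k) * A i k else 0)"
    unfolding row_val_def sum_subtractf[symmetric] by (rule sum.cong) (auto simp: algebra_simps)
  also have "\<dots> = (\<Sum>k\<in>T. of_int (s k) * A i k)"
    using assms by (simp add: sum.If_cases Int_absorb1)
  finally show ?thesis
    by simp
qed

lemma adjacent_iff:
  "adjacent n x y \<longleftrightarrow> (\<exists>j\<in>{1..n}. x j \<noteq> y j \<and> (\<forall>k\<in>{1..n} - {j}. x k = y k))"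
proof -
  have "adjacent n x y \<longleftrightarrow> (\<exists>j. {k\<in>{1..n}. x k \<noteq> y k} = {j})"
    by (simp add: adjacent_def card_1_singleton_iff)
  also have "\<dots> \<longleftrightarrow> (\<exists>j\<in>{1..n}. x j \<noteq> y j \<and> (\<forall>k\<in>{1..n} - {j}. x k = y k))"
  proof
    assume "\<exists>j. {k\<in>{1..n}. x k \<noteq> y k} = {j}"
    then obtain j where "{k\<in>{1..n}. x k \<noteq> y k} = {j}" ..
    then show "\<exists>j\<in>{1..n}. x j \<noteq> y j \<and> (\<forall>k\<in>{1..n} - {j}. x k = y k)"
      by (intro bexI[of _ j]) blast+
  next
    assume "\<exists>j\<in>{1..n}. x j \<noteq> y j \<and> (\<forall>k\<in>{1..n} - {j}. x k = y k)"
    then show "\<exists>j. {k\<in>{1..n}. x k \<noteq> y k} = {j}"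
      by blast
  qed
  finally show ?thesis .
qed

lemma adjacent_fun_upd:
  assumes "adjacent n x y" and "x \<in> box d n" and "y \<in> box d n"
  shows "x(j := v) = y(j := v) \<or> adjacent n (x(j := v)) (y(j := v))"
proof -
  obtain a where a: "a \<in> {1..n}" "x a \<noteq> y a" "\<forall>k\<in>{1..n} - {a}. x k = y k"
    using assms(1) unfolding adjacent_iff by blast
  have outside: "x k = y k" if "k \<notin> {1..n}" for k
    using assms(2,3) that by (simp add: box_def)
  show ?thesis
  proof (cases "a = j")
    case True
    then have "x(j := v) = y(j := v)"
      using a outside by (intro ext) (metis Diff_iff fun_upd_apply singletonD)
    then show ?thesis ..
  next
    case False
    then have "adjacent n (x(j := v)) (y(j := v))"
      using a unfolding adjacent_iff by (intro bexI[of _ a]) auto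
    then show ?thesis ..
  qed
qed

lemma sol_graph_connected_retract:
  assumes conn: "sol_graph_connected n R" and sub: "R' \<subseteq> R"
    and into: "f ` R \<subseteq> R'" and fixes_R': "\<forall>x\<in>R'. f x = x"
    and adj: "\<forall>x\<in>R. \<forall>y\<in>R. adjacent n x y \<longrightarrow> f x = f y \<or> adjacent n (f x) (f y)"
  shows "sol_graph_connected n R'"
  unfolding sol_graph_connected_def
proof (intro ballI)
  let ?E = "\<lambda>R. {(u, w). u \<in> R \<and> w \<in> R \<and> adjacent n u w}"
  fix u w
  assume u: "u \<in> R'" and w: "w \<in> R'"
  have "(u, w) \<in> (?E R)\<^sup>*"
    using conn sub u w unfolding sol_graph_connected_def by blast
  then have "(f u, f w) \<in> (?E R')\<^sup>*"
  proof (induction rule: rtrancl_induct)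
    case (step y z)
    then have "y \<in> R" "z \<in> R" "adjacent n y z"
      by auto
    then have "f y = f z \<or> (f y, f z) \<in> ?E R'"
      using adj into by blast
    with step.IH show ?case
      by (auto intro: rtrancl_into_rtrancl)
  qed simp
  then show "(u, w) \<in> (?E R')\<^sup>*"
    using fixes_R' u w by simp
qed

lemma not_sol_graph_connected_if_isolated:
  assumes "x \<in> R" and "y \<in> R" and "x \<noteq> y" and "\<forall>z\<in>R. \<not> adjacent n x z"
  shows "\<not> sol_graph_connected n R"
proof
  assume "sol_graph_connected n R"
  then have "(x, y) \<in> {(u, w). u \<in> R \<and> w \<in> R \<and> adjacent n u w}\<^sup>*"
    using assms(1,2) unfolding sol_graph_connected_def by blast
  then show False
    using assms(3,4) by (cases rule: converse_rtranclE) auto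
qed

section \<open>Fixing an eliminable column\<close>

definition best_value :: "nat \<Rightarrow> nat \<Rightarrow> (nat \<Rightarrow> nat \<Rightarrow> real) \<Rightarrow> nat set \<Rightarrow> nat \<Rightarrow> int \<Rightarrow> bool" where
  "best_value d m A J j v \<longleftrightarrow> v \<in> {0..int d} \<and>
     (\<forall>i\<in>{1..m}. (\<forall>j'\<in>J - {j}. A i j' = 0) \<or> (\<forall>t\<in>{0..int d}. A i j * of_int t \<le> A i j * of_int v))"

lemma can_elim_best_value:
  assumes "can_elim m A J j"
  shows "\<exists>v. best_value d m A J j v"
proof (cases "\<forall>i\<in>{1..m}. A i j > 0 \<longrightarrow> (\<forall>j'\<in>J - {j}. A i j' = 0)")
  case True
  then have "best_value d m A J j 0"
    by (auto simp: best_value_def mult_nonpos_nonneg)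
  then show ?thesis ..
next
  case False
  with assms have "\<forall>i\<in>{1..m}. A i j < 0 \<longrightarrow> (\<forall>j'\<in>J - {j}. A i j' = 0)"
    unfolding can_elim_def by blast
  then have "best_value d m A J j (int d)"
    by (auto simp: best_value_def intro!: mult_left_mono)
  then show ?thesis ..
qed

text \<open>Rows without further entries in \<open>J\<close> only see fixed coordinates, so they take the same
  value at \<open>x(j := v)\<close> as at any point \<open>u\<close> of the smaller slice; all other rows can only grow.\<close>
lemma fix_column_mem_slice:
  assumes J: "J \<subseteq> {1..n}" "j \<in> J" and best: "best_value d m A J j v"
    and u: "u \<in> slice d m n A b (J - {j}) (c(j := v))" and x: "x \<in> slice d m n A b J c"
  shows "x(j := v) \<in> slice d m n A b (J - {j}) (c(j := v))"
proof -
  have v: "v \<in> {0..int d}"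
    and best_rows: "\<forall>i\<in>{1..m}. (\<forall>j'\<in>J - {j}. A i j' = 0) \<or> (\<forall>t\<in>{0..int d}. A i j * of_int t \<le> A i j * of_int v)"
    using best unfolding best_value_def by blast+
  have jn: "j \<in> {1..n}"
    using J by auto
  have xj: "x j \<in> {0..int d}"
    using x jn by (auto simp: mem_slice_iff box_def)
  have "b i \<le> row_val n A i (x(j := v))" if i: "i \<in> {1..m}" for i
  proof (cases "\<forall>j'\<in>J - {j}. A i j' = 0")
    case True
    have "(x(j := v)) k = u k" if k: "k \<in> {1..n}" "A i k \<noteq> 0" for k
    proof (cases "k = j")
      case False
      with True k(2) have "k \<notin> J"
        by blast
      with False k(1) u x show ?thesis
        by (auto simp: mem_slice_iff)
    qed (use u k(1) in \<open>simp add: mem_slice_iff\<close>)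
    then have "row_val n A i (x(j := v)) = row_val n A i u"
      by (rule row_val_cong)
    then show ?thesis
      using u i by (simp add: mem_slice_iff)
  next
    case False
    then have "A i j * of_int (x j) \<le> A i j * of_int v"
      using best_rows i xj by blast
    then have "row_val n A i x \<le> row_val n A i (x(j := v))"
      using row_val_change_one[OF jn, of "x(j := v)" x A i] by (simp add: algebra_simps)
    then show ?thesis
      using x i by (force simp: mem_slice_iff)
  qed
  then show ?thesis
    using x v jn by (auto simp: mem_slice_iff box_def)
qed

lemma slice_connected_fix_column:
  assumes J: "J \<subseteq> {1..n}" "j \<in> J" and best: "best_value d m A J j v"
    and conn: "sol_graph_connected n (slice d m n A b J c)"
  shows "sol_graph_connected n (slice d m n A b (J - {j}) (c(j := v)))"
proof (cases "slice d m n A b (J - {j}) (c(j := v)) = {}")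
  case True
  then show ?thesis
    by (simp add: sol_graph_connected_def)
next
  case False
  then obtain u where u: "u \<in> slice d m n A b (J - {j}) (c(j := v))"
    by blast
  show ?thesis
  proof (rule sol_graph_connected_retract[OF conn, where f = "\<lambda>x. x(j := v)"])
    show "slice d m n A b (J - {j}) (c(j := v)) \<subseteq> slice d m n A b J c"
      using J by (auto simp: mem_slice_iff)
    show "(\<lambda>x. x(j := v)) ` slice d m n A b J c \<subseteq> slice d m n A b (J - {j}) (c(j := v))"
      using fix_column_mem_slice[OF J best u] by blast
    show "\<forall>x\<in>slice d m n A b (J - {j}) (c(j := v)). x(j := v) = x"
      using J by (auto simp: mem_slice_iff fun_upd_idem_iff)
    show "\<forall>x\<in>slice d m n A b J c. \<forall>y\<in>slice d m n A b J c.
        adjacent n x y \<longrightarrow> x(j := v) = y(j := v) \<or> adjacent n (x(j := v)) (y(j := v))"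
      using adjacent_fun_upd[of n _ _ d j v] by (simp add: mem_slice_iff)
  qed
qed

section \<open>Isolated corners\<close>

lemma mult_le_sign_step:
  fixes a :: real and \<sigma> \<delta> :: int
  assumes "\<sigma> \<in> {1, -1}" and "of_int \<sigma> * a < 0" and "1 \<le> \<sigma> * \<delta>"
  shows "a * of_int \<delta> \<le> of_int \<sigma> * a"
proof -
  have "a * of_int \<delta> = (of_int \<sigma> * a) * of_int (\<sigma> * \<delta>)"
    using assms(1) by (auto simp: algebra_simps)
  also have "\<dots> \<le> of_int \<sigma> * a"
  proof -
    have "(1::real) \<le> of_int (\<sigma> * \<delta>)"
      using assms(3) by linarith
    then show ?thesis
      using mult_left_mono_neg[of 1 "of_int (\<sigma> * \<delta>)" "of_int \<sigma> * a"] assms(2) by simp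
  qed
  finally show ?thesis .
qed

text \<open>Let \<open>p\<close> be the corner of the box with \<open>p k = 0\<close> if \<open>s k = 1\<close> and \<open>p k = d\<close> if \<open>s k = -1\<close>,
  and \<open>q = p + s\<close> on \<open>T\<close>. Row \<open>i\<close> blocks column \<open>j\<close> if every step from \<open>p\<close> along coordinate \<open>j\<close>
  (necessarily in direction \<open>s j\<close>) pushes row \<open>i\<close> below both its value at \<open>p\<close> and at \<open>q\<close>.\<close>
definition blocks :: "nat \<Rightarrow> (nat \<Rightarrow> nat \<Rightarrow> real) \<Rightarrow> (nat \<Rightarrow> int) \<Rightarrow> nat set \<Rightarrow> nat \<Rightarrow> bool" where
  "blocks m A s T j \<longleftrightarrow>
     (\<exists>i\<in>{1..m}. of_int (s j) * A i j < 0 \<and> of_int (s j) * A i j < (\<Sum>k\<in>T. of_int (s k) * A i k))"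

definition isolating :: "nat \<Rightarrow> (nat \<Rightarrow> nat \<Rightarrow> real) \<Rightarrow> nat set \<Rightarrow> nat set \<Rightarrow> (nat \<Rightarrow> int) \<Rightarrow> bool" where
  "isolating m A J T s \<longleftrightarrow>
     T \<subseteq> J \<and> T \<noteq> {} \<and> (\<forall>k\<in>J. s k \<in> {1, -1}) \<and> (\<forall>j\<in>J. blocks m A s T j)"

lemma neighbour_of_corner_violates_row:
  assumes y: "y \<in> box d n" and adj: "adjacent n p y" and outside: "\<forall>k\<in>{1..n} - J. y k = p k"
    and corner: "\<forall>k\<in>J. p k = (if s k = 1 then 0 else int d)"
    and s: "\<forall>k\<in>J. s k \<in> {1, -1}" and blk: "\<forall>j\<in>J. blocks m A s T j"
  shows "\<exists>i\<in>{1..m}. row_val n A i y < row_val n A i p \<and>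
    row_val n A i y < row_val n A i p + (\<Sum>k\<in>T. of_int (s k) * A i k)"
proof -
  obtain j where j: "j \<in> {1..n}" "p j \<noteq> y j" and agree: "\<forall>k\<in>{1..n} - {j}. y k = p k"
    using adj unfolding adjacent_iff by fastforce
  have jJ: "j \<in> J"
    using outside j(1,2) by (metis DiffI)
  obtain i where i: "i \<in> {1..m}" "of_int (s j) * A i j < 0"
    "of_int (s j) * A i j < (\<Sum>k\<in>T. of_int (s k) * A i k)"
    using blk jJ unfolding blocks_def by blast
  have "y j \<in> {0..int d}"
    using y j(1) by (auto simp: box_def)
  then have "1 \<le> s j * (y j - p j)"
    using corner s jJ j(2) by auto
  then have "A i j * of_int (y j - p j) \<le> of_int (s j) * A i j"
    using s jJ i(2) by (intro mult_le_sign_step) auto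
  then have "row_val n A i y \<le> row_val n A i p + of_int (s j) * A i j"
    using row_val_change_one[OF j(1) agree, of A i] by linarith
  then show ?thesis
    using i by (intro bexI[of _ i]) auto
qed

lemma slice_not_connected_if_isolating:
  assumes d: "d \<ge> 1" and J: "J \<subseteq> {1..n}" and c: "\<forall>k\<in>{1..n} - J. c k \<in> {0..int d}"
    and iso: "isolating m A J T s"
  shows "\<exists>b. \<not> sol_graph_connected n (slice d m n A b J c)"
proof -
  have T: "T \<subseteq> J" "T \<noteq> {}" and s: "\<forall>k\<in>J. s k \<in> {1, -1}" and blk: "\<forall>j\<in>J. blocks m A s T j"
    using iso by (auto simp: isolating_def)
  define p where "p k = (if k \<in> J then (if s k = 1 then 0 else int d) else if k \<in> {1..n} then c k else 0)"
    for k
  define q where "q k = (if k \<in> T then p k + s k else p k)" for k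
  define b where "b i = min (row_val n A i p) (row_val n A i q)" for i
  let ?S = "slice d m n A b J c"
  have p_box: "p \<in> box d n"
    using J c d by (auto simp: box_def p_def)
  have q_box: "q \<in> box d n"
    using p_box J T s d by (force simp: box_def q_def p_def subset_iff)
  have "p \<in> ?S" "q \<in> ?S"
    using p_box q_box T by (auto simp: mem_slice_iff b_def p_def q_def)
  moreover have "p \<noteq> q"
  proof -
    obtain k where "k \<in> T"
      using T by blast
    then have "q k \<noteq> p k"
      using s T by (force simp: q_def)
    then show ?thesis
      by metis
  qed
  moreover have "\<not> adjacent n p y" if y: "y \<in> ?S" for y
  proof
    assume adj: "adjacent n p y"
    have "y \<in> box d n" and outside: "\<forall>k\<in>{1..n} - J. y k = p k"
      using y by (auto simp: mem_slice_iff p_def)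
    moreover have "\<forall>k\<in>J. p k = (if s k = 1 then 0 else int d)"
      by (simp add: p_def)
    ultimately obtain i where i: "i \<in> {1..m}" "row_val n A i y < row_val n A i p"
      "row_val n A i y < row_val n A i p + (\<Sum>k\<in>T. of_int (s k) * A i k)"
      using neighbour_of_corner_violates_row[OF _ adj outside _ s blk] by blast
    have "row_val n A i q = row_val n A i p + (\<Sum>k\<in>T. of_int (s k) * A i k)"
      unfolding q_def using J T by (intro row_val_shift) auto
    then have "row_val n A i y < b i"
      using i by (simp add: b_def)
    then show False
      using y i(1) by (force simp: mem_slice_iff)
  qed
  ultimately have "\<not> sol_graph_connected n ?S"
    by (intro not_sol_graph_connected_if_isolated) auto
  then show ?thesis
    by blast
qed

section \<open>Sign patterns without eliminable columns\<close>

lemma not_can_elim_iff: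
  "\<not> can_elim m A J j \<longleftrightarrow>
     (\<exists>i\<in>{1..m}. A i j > 0 \<and> (\<exists>j'\<in>J - {j}. A i j' \<noteq> 0)) \<and>
     (\<exists>i\<in>{1..m}. A i j < 0 \<and> (\<exists>j'\<in>J - {j}. A i j' \<noteq> 0))"
  by (auto simp: can_elim_def)

lemma not_can_elim_opposite_row:
  assumes "\<not> can_elim m A J t" and "x \<noteq> 0"
  obtains r where "r \<in> {1..m}" "A r t * x < 0" "\<exists>l\<in>J - {t}. A r l \<noteq> 0"
proof -
  obtain r1 r2 where r1: "r1 \<in> {1..m}" "A r1 t > 0" "\<exists>l\<in>J - {t}. A r1 l \<noteq> 0"
    and r2: "r2 \<in> {1..m}" "A r2 t < 0" "\<exists>l\<in>J - {t}. A r2 l \<noteq> 0"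
    using assms(1) unfolding not_can_elim_iff by blast
  show thesis
  proof (cases "x > 0")
    case True
    then show thesis
      using that[OF r2(1) _ r2(3)] r2(2) by (simp add: mult_neg_pos)
  next
    case False
    then have "x < 0"
      using assms(2) by simp
    then show thesis
      using that[OF r1(1) _ r1(3)] r1(2) by (simp add: mult_pos_neg)
  qed
qed

lemma not_can_elim_two_rows:
  assumes "\<not> can_elim m A J t"
  shows "\<exists>i1\<in>{1..m}. \<exists>i2\<in>{1..m}. i1 \<noteq> i2 \<and> A i1 t \<noteq> 0 \<and> A i2 t \<noteq> 0"
proof -
  obtain i1 i2 where "i1 \<in> {1..m}" "A i1 t > 0" "i2 \<in> {1..m}" "A i2 t < 0"
    using assms unfolding not_can_elim_iff by blast
  then show ?thesis
    by (intro bexI[of _ i1] bexI[of _ i2]) auto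
qed

lemma opposite_pair_among_three_rows:
  fixes A :: "nat \<Rightarrow> nat \<Rightarrow> real"
  assumes "A p j * A q j < 0" and "A p k \<noteq> 0" and "A q k \<noteq> 0"
    and "A r k * A p k < 0" and "A r j \<noteq> 0"
  shows "\<exists>x\<in>{p, q, r}. \<exists>y\<in>{p, q, r}. A x j * A y j < 0 \<and> A x k * A y k < 0"
proof (cases "A p k * A q k < 0")
  case True
  then show ?thesis
    using assms(1) by blast
next
  case False
  then have "A r k * A q k < 0"
    using assms(2-4) by (auto simp: mult_less_0_iff)
  moreover have "A r j * A p j < 0 \<or> A r j * A q j < 0"
    using assms(1,5) by (auto simp: mult_less_0_iff)
  ultimately show ?thesis
    using assms(4) by blast
qed

lemma mem_of_three_distinct:
  fixes m p q r x :: nat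
  assumes "m \<le> 3" and "{p, q, r, x} \<subseteq> {1..m}" and "distinct [p, q, r]"
  shows "x \<in> {p, q, r}"
proof (rule ccontr)
  assume "x \<notin> {p, q, r}"
  then have "card {p, q, r, x} = 4"
    using assms(3) by auto
  moreover have "card {p, q, r, x} \<le> card {1..m}"
    using assms(2) by (intro card_mono) auto
  ultimately show False
    using assms(1) by simp
qed

lemma blocks_by_row:
  assumes "finite T" and "j \<in> T" and "i \<in> {1..m}" and "of_int (s j) * A i j < 0"
    and "0 < (\<Sum>k\<in>T - {j}. of_int (s k) * A i k)"
  shows "blocks m A s T j"
  unfolding blocks_def
  using assms sum.remove[OF assms(1,2), of "\<lambda>k. of_int (s k) * A i k"] by (intro bexI[of _ i]) auto

lemma isolating_extend:
  assumes iso: "isolating m A T T s" and "T \<subseteq> J"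
    and rows: "\<forall>t\<in>J - T. \<exists>i\<in>{1..m}. A i t \<noteq> 0 \<and> 0 \<le> (\<Sum>k\<in>T. of_int (s k) * A i k)"
  shows "\<exists>s'. isolating m A J T s'"
proof -
  obtain f where f: "\<forall>t\<in>J - T. f t \<in> {1..m} \<and> A (f t) t \<noteq> 0 \<and> 0 \<le> (\<Sum>k\<in>T. of_int (s k) * A (f t) k)"
    using rows by metis
  define s' where "s' k = (if k \<in> T then s k else if A (f k) k > 0 then -1 else 1)" for k
  have same_sum: "(\<Sum>k\<in>T. of_int (s' k) * A i k) = (\<Sum>k\<in>T. of_int (s k) * A i k)" for i
    by (rule sum.cong) (simp_all add: s'_def)
  have "blocks m A s' T j" if "j \<in> J" for j
  proof (cases "j \<in> T")
    case True
    then show ?thesis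
      using iso by (simp add: isolating_def blocks_def same_sum s'_def)
  next
    case False
    then have fj: "f j \<in> {1..m}" "A (f j) j \<noteq> 0" "0 \<le> (\<Sum>k\<in>T. of_int (s k) * A (f j) k)"
      using f that by auto
    then have "of_int (s' j) * A (f j) j < 0"
      using False by (auto simp: s'_def)
    then show ?thesis
      unfolding blocks_def same_sum using fj by force
  qed
  moreover have "\<forall>k\<in>J. s' k \<in> {1, -1}"
    using iso by (auto simp: isolating_def s'_def)
  ultimately show ?thesis
    using iso \<open>T \<subseteq> J\<close> unfolding isolating_def by blast
qed

definition two_sided_isolating :: "nat \<Rightarrow> (nat \<Rightarrow> nat \<Rightarrow> real) \<Rightarrow> nat set \<Rightarrow> (nat \<Rightarrow> int) \<Rightarrow> bool" where
  "two_sided_isolating m A T s \<longleftrightarrow> isolating m A T T s \<and> isolating m A T T (\<lambda>k. - s k)"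

text \<open>If neither \<open>s\<close> nor \<open>-s\<close> extends, some column has only rows with negative \<open>s\<close>-sum among its
  nonzero rows and another one only rows with positive \<open>s\<close>-sum; as each column has two nonzero
  rows, this needs four rows.\<close>
lemma isolating_of_two_sided:
  assumes m3: "m \<le> 3" and stuck: "\<forall>t\<in>J. \<not> can_elim m A J t" and "T \<subseteq> J"
    and two_sided: "two_sided_isolating m A T s"
  shows "\<exists>s'. isolating m A J T s'"
proof -
  have pos: "isolating m A T T s" and neg: "isolating m A T T (\<lambda>k. - s k)"
    using two_sided unfolding two_sided_isolating_def by simp_all
  define \<sigma> where "\<sigma> i = (\<Sum>k\<in>T. of_int (s k) * A i k)" for i
  have neg_sum: "(\<Sum>k\<in>T. of_int (- s k) * A i k) = - \<sigma> i" for i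
    by (simp add: \<sigma>_def sum_negf)
  have two_rows: "\<exists>i1\<in>{1..m}. \<exists>i2\<in>{1..m}. i1 \<noteq> i2 \<and> A i1 t \<noteq> 0 \<and> A i2 t \<noteq> 0" if "t \<in> J" for t
    using not_can_elim_two_rows stuck that by blast
  show ?thesis
  proof (cases "\<forall>t\<in>J - T. \<exists>i\<in>{1..m}. A i t \<noteq> 0 \<and> 0 \<le> \<sigma> i")
    case True
    then show ?thesis
      using isolating_extend[OF pos \<open>T \<subseteq> J\<close>] by (simp add: \<sigma>_def)
  next
    case False
    then obtain t where t: "t \<in> J" "\<forall>i\<in>{1..m}. A i t \<noteq> 0 \<longrightarrow> \<sigma> i < 0"
      by (meson DiffD1 not_le)
    show ?thesis
    proof (cases "\<forall>t\<in>J - T. \<exists>i\<in>{1..m}. A i t \<noteq> 0 \<and> 0 \<le> - \<sigma> i")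
      case True
      then show ?thesis
        using isolating_extend[OF neg \<open>T \<subseteq> J\<close>, unfolded neg_sum] by simp
    next
      case False
      then obtain t' where t': "t' \<in> J" "\<forall>i\<in>{1..m}. A i t' \<noteq> 0 \<longrightarrow> 0 < \<sigma> i"
        by (meson DiffD1 neg_0_le_iff_le not_le)
      obtain i1 i2 where i12: "i1 \<in> {1..m}" "i2 \<in> {1..m}" "i1 \<noteq> i2" "A i1 t \<noteq> 0" "A i2 t \<noteq> 0"
        using two_rows[OF t(1)] by blast
      obtain i3 i4 where i34: "i3 \<in> {1..m}" "i4 \<in> {1..m}" "i3 \<noteq> i4" "A i3 t' \<noteq> 0" "A i4 t' \<noteq> 0"
        using two_rows[OF t'(1)] by blast
      have "\<sigma> i1 < 0" "\<sigma> i2 < 0" "0 < \<sigma> i3" "0 < \<sigma> i4"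
        using t(2) t'(2) i12 i34 by simp_all
      have "i4 \<in> {i1, i2, i3}"
        using i12 i34 \<open>\<sigma> i1 < 0\<close> \<open>\<sigma> i2 < 0\<close> \<open>0 < \<sigma> i3\<close>
        by (intro mem_of_three_distinct[OF m3]) auto
      then show ?thesis
        using i34(3) \<open>\<sigma> i1 < 0\<close> \<open>\<sigma> i2 < 0\<close> \<open>0 < \<sigma> i4\<close> by auto
    qed
  qed
qed

lemma two_sided_isolating_pair:
  assumes jk: "j \<noteq> k" and r: "r \<in> {1..m}" "r' \<in> {1..m}"
    and opp: "A r j * A r' j < 0" "A r k * A r' k < 0"
  shows "\<exists>s. two_sided_isolating m A {j, k} s"
proof -
  define s :: "nat \<Rightarrow> int"
    where "s x = (if x = j then (if A r j < 0 then 1 else -1) else if A r k > 0 then 1 else -1)" for x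
  have sj: "of_int (s j) * A r j < 0" "0 < of_int (s j) * A r' j"
    using opp(1) by (auto simp: s_def mult_less_0_iff)
  have sk: "0 < of_int (s k) * A r k" "of_int (s k) * A r' k < 0"
    using opp(2) jk by (auto simp: s_def mult_less_0_iff)
  have rest: "{j, k} - {j} = {k}" "{j, k} - {k} = {j}"
    using jk by auto
  have "blocks m A s {j, k} j" "blocks m A s {j, k} k"
    "blocks m A (\<lambda>x. - s x) {j, k} j" "blocks m A (\<lambda>x. - s x) {j, k} k"
  proof -
    show "blocks m A s {j, k} j"
      by (rule blocks_by_row[where i = r]) (use r sj sk rest in simp_all)
    show "blocks m A s {j, k} k"
      by (rule blocks_by_row[where i = r']) (use r sj sk rest in simp_all)
    show "blocks m A (\<lambda>x. - s x) {j, k} j"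
      by (rule blocks_by_row[where i = r']) (use r sj sk rest in simp_all)
    show "blocks m A (\<lambda>x. - s x) {j, k} k"
      by (rule blocks_by_row[where i = r]) (use r sj sk rest in simp_all)
  qed
  then show ?thesis
    by (intro exI[of _ s]) (auto simp: two_sided_isolating_def isolating_def s_def)
qed

lemma two_sided_isolating_subset_of_pair:
  assumes "j \<in> J" "k \<in> J" "j \<noteq> k" "r \<in> {1..m}" "r' \<in> {1..m}"
    and "A r j * A r' j < 0" "A r k * A r' k < 0"
  shows "\<exists>T s. T \<subseteq> J \<and> two_sided_isolating m A T s"
proof -
  obtain s where "two_sided_isolating m A {j, k} s"
    using two_sided_isolating_pair[OF assms(3-7)] by blast
  moreover have "{j, k} \<subseteq> J"
    using assms(1,2) by simp
  ultimately show ?thesis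
    by blast
qed

lemma two_sided_isolating_triangle:
  assumes jkl: "distinct [j, k, l]" and rows: "p \<in> {1..m}" "q \<in> {1..m}" "r \<in> {1..m}"
    and opp: "A p j * A q j < 0" "A p k * A r k < 0" "A q l * A r l < 0"
    and zero: "A r j = 0" "A q k = 0" "A p l = 0"
  shows "\<exists>s. two_sided_isolating m A {j, k, l} s"
proof -
  define s :: "nat \<Rightarrow> int"
    where "s x = (if x = j then (if A p j > 0 then 1 else -1)
      else if x = k then (if A p k < 0 then 1 else -1) else if A q l > 0 then 1 else -1)" for x
  have sj: "0 < of_int (s j) * A p j" "of_int (s j) * A q j < 0"
    using opp(1) by (auto simp: s_def mult_less_0_iff)
  have sk: "of_int (s k) * A p k < 0" "0 < of_int (s k) * A r k"
    using opp(2) jkl by (auto simp: s_def mult_less_0_iff)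
  have sl: "0 < of_int (s l) * A q l" "of_int (s l) * A r l < 0"
    using opp(3) jkl by (auto simp: s_def mult_less_0_iff)
  have rest: "{j, k, l} - {j} = {k, l}" "{j, k, l} - {k} = {j, l}" "{j, k, l} - {l} = {j, k}"
    using jkl by auto
  have "blocks m A s {j, k, l} j" "blocks m A s {j, k, l} k" "blocks m A s {j, k, l} l"
    "blocks m A (\<lambda>x. - s x) {j, k, l} j" "blocks m A (\<lambda>x. - s x) {j, k, l} k"
    "blocks m A (\<lambda>x. - s x) {j, k, l} l"
  proof -
    show "blocks m A s {j, k, l} j"
      by (rule blocks_by_row[where i = q]) (use jkl rows sj sk sl zero rest in simp_all)
    show "blocks m A s {j, k, l} k"
      by (rule blocks_by_row[where i = p]) (use jkl rows sj sk sl zero rest in simp_all)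
    show "blocks m A s {j, k, l} l"
      by (rule blocks_by_row[where i = r]) (use jkl rows sj sk sl zero rest in simp_all)
    show "blocks m A (\<lambda>x. - s x) {j, k, l} j"
      by (rule blocks_by_row[where i = p]) (use jkl rows sj sk sl zero rest in simp_all)
    show "blocks m A (\<lambda>x. - s x) {j, k, l} k"
      by (rule blocks_by_row[where i = r]) (use jkl rows sj sk sl zero rest in simp_all)
    show "blocks m A (\<lambda>x. - s x) {j, k, l} l"
      by (rule blocks_by_row[where i = q]) (use jkl rows sj sk sl zero rest in simp_all)
  qed
  then show ?thesis
    by (intro exI[of _ s]) (auto simp: two_sided_isolating_def isolating_def s_def)
qed

lemma two_sided_isolating_subset_common_column:
  assumes m3: "m \<le> 3" and stuck: "\<forall>t\<in>J. \<not> can_elim m A J t"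
    and jk: "j \<in> J" "k \<in> J" "j \<noteq> k" and pq: "p \<in> {1..m}" "q \<in> {1..m}" "A p j * A q j < 0"
    and k_nonzero: "A p k \<noteq> 0" "A q k \<noteq> 0"
  shows "\<exists>T s. T \<subseteq> J \<and> two_sided_isolating m A T s"
proof -
  have "\<not> can_elim m A J k"
    using stuck jk(2) by blast
  then obtain r where r: "r \<in> {1..m}" "A r k * A p k < 0" and "\<exists>l\<in>J - {k}. A r l \<noteq> 0"
    using not_can_elim_opposite_row k_nonzero(1) by blast
  then obtain l where l: "l \<in> J - {k}" "A r l \<noteq> 0"
    by blast
  show ?thesis
  proof (cases "A r j = 0")
    case False
    then obtain x y where "x \<in> {p, q, r}" "y \<in> {p, q, r}" "A x j * A y j < 0" "A x k * A y k < 0"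
      using opposite_pair_among_three_rows[OF pq(3) k_nonzero r(2)] by blast
    then show ?thesis
      using two_sided_isolating_subset_of_pair[where j = j and k = k and r = x and r' = y] jk pq r(1) by blast
  next
    case True
    show ?thesis
    proof (cases "A p k * A q k < 0")
      case True
      then show ?thesis
        using two_sided_isolating_subset_of_pair[where j = j and k = k and r = p and r' = q] jk pq by blast
    next
      case False
      then have rq: "A r k * A q k < 0"
        using k_nonzero r(2) by (auto simp: mult_less_0_iff)
      have "\<not> can_elim m A J l"
        using stuck l(1) by blast
      then obtain x where x: "x \<in> {1..m}" "A x l * A r l < 0"
        using not_can_elim_opposite_row l(2) by blast
      have "x \<noteq> r" "r \<noteq> p" "r \<noteq> q" "p \<noteq> q"
        using not_square_less_zero x(2) r(2) rq pq(3) by metis+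
      then have "x = p \<or> x = q"
        using mem_of_three_distinct[OF m3, of p q r x] pq r x by auto
      then have "A x k * A r k < 0"
        using r(2) rq by (auto simp: mult.commute)
      then show ?thesis
        using two_sided_isolating_subset_of_pair[where j = k and k = l and r = x and r' = r] jk l x r by blast
    qed
  qed
qed

text \<open>Rows \<open>p\<close>, \<open>q\<close> of opposite signs in a column \<open>j\<close> both meet further columns. If they meet
  a common one, the previous lemma applies; otherwise, with \<open>m \<le> 3\<close>, the rows opposing \<open>p\<close> and
  \<open>q\<close> in these columns coincide and produce a pair or the triangle.\<close>
lemma two_sided_isolating_subset_if_stuck:
  assumes m3: "m \<le> 3" and "J \<noteq> {}" and stuck: "\<forall>t\<in>J. \<not> can_elim m A J t"
  shows "\<exists>T s. T \<subseteq> J \<and> two_sided_isolating m A T s"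
proof -
  obtain j where j: "j \<in> J"
    using \<open>J \<noteq> {}\<close> by blast
  then have "\<not> can_elim m A J j"
    using stuck by blast
  then obtain p k q l where p: "p \<in> {1..m}" "A p j > 0" "k \<in> J - {j}" "A p k \<noteq> 0"
    and q: "q \<in> {1..m}" "A q j < 0" "l \<in> J - {j}" "A q l \<noteq> 0"
    unfolding not_can_elim_iff by blast
  have pq: "A p j * A q j < 0"
    using p(2) q(2) by (simp add: mult_pos_neg)
  show ?thesis
  proof (cases "A q k = 0 \<and> A p l = 0")
    case False
    then obtain k' where "k' \<in> J - {j}" "A p k' \<noteq> 0" "A q k' \<noteq> 0"
      using p q by blast
    then show ?thesis
      using two_sided_isolating_subset_common_column[OF m3 stuck j _ _ p(1) q(1) pq] by blast
  next
    case True
    have "\<not> can_elim m A J k" "\<not> can_elim m A J l"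
      using stuck p(3) q(3) by blast+
    then obtain r r' where r: "r \<in> {1..m}" "A r k * A p k < 0" and r': "r' \<in> {1..m}" "A r' l * A q l < 0"
      using not_can_elim_opposite_row p(4) q(4) by metis
    have "r \<noteq> p" "r' \<noteq> q" "p \<noteq> q"
      using not_square_less_zero r(2) r'(2) pq by metis+
    moreover have "r \<noteq> q" "r' \<noteq> p"
      using r(2) r'(2) True by auto
    ultimately have "r' = r"
      using mem_of_three_distinct[OF m3, of p q r r'] p q r r' by auto
    show ?thesis
    proof (cases "A r j = 0")
      case True
      have "k \<noteq> l"
        using p(4) \<open>A q k = 0 \<and> A p l = 0\<close> by auto
      then obtain s where "two_sided_isolating m A {j, k, l} s"
        using two_sided_isolating_triangle[of j k l p m q r A] p q r r' \<open>r' = r\<close> pq True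
          \<open>A q k = 0 \<and> A p l = 0\<close> by (auto simp: mult.commute)
      then show ?thesis
        using j p(3) q(3) by (intro exI[of _ "{j, k, l}"] exI[of _ s]) auto
    next
      case False
      then have "A r j * A p j < 0 \<or> A r j * A q j < 0"
        using p(2) q(2) by (auto simp: mult_less_0_iff)
      then show ?thesis
        using two_sided_isolating_subset_of_pair[where j = j and k = k and r = r and r' = p]
          two_sided_isolating_subset_of_pair[where j = j and k = l and r = r and r' = q]
          j p q r r' \<open>r' = r\<close> by (auto simp: mult.commute)
    qed
  qed
qed

lemma isolating_if_stuck_two_columns:
  assumes "n \<le> 2" and J: "J \<subseteq> {1..n}" "J \<noteq> {}" and stuck: "\<forall>t\<in>J. \<not> can_elim m A J t"
  shows "\<exists>T s. isolating m A J T s"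
proof -
  obtain j where j: "j \<in> J"
    using J(2) by blast
  then have "\<not> can_elim m A J j"
    using stuck by blast
  then obtain p k q l where p: "p \<in> {1..m}" "A p j > 0" "k \<in> J - {j}" "A p k \<noteq> 0"
    and q: "q \<in> {1..m}" "A q j < 0" "l \<in> J - {j}" "A q l \<noteq> 0"
    unfolding not_can_elim_iff by blast
  have "card J \<le> 2"
    using card_mono[OF finite_atLeastAtMost J(1)] assms(1) by simp
  then have J_eq: "J = {j, k}"
    using j p(3) finite_subset[OF J(1)] by (intro card_seteq[symmetric]) auto
  then have "A q k \<noteq> 0"
    using q(3,4) by auto
  have pq: "A p j * A q j < 0"
    using p(2) q(2) by (simp add: mult_pos_neg)
  obtain r where r: "r \<in> {1..m}" "A r k * A p k < 0" "\<exists>l\<in>J - {k}. A r l \<noteq> 0"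
    using not_can_elim_opposite_row[of m A J k "A p k"] stuck p(3,4) by blast
  then have "A r j \<noteq> 0"
    using J_eq by auto
  then obtain x y where "x \<in> {p, q, r}" "y \<in> {p, q, r}" "A x j * A y j < 0" "A x k * A y k < 0"
    using opposite_pair_among_three_rows[OF pq p(4) \<open>A q k \<noteq> 0\<close> r(2)] by blast
  then obtain s where "two_sided_isolating m A {j, k} s"
    using two_sided_isolating_pair[of j k x m y A] p q r by auto
  then show ?thesis
    using J_eq unfolding two_sided_isolating_def by blast
qed

lemma isolating_if_stuck:
  assumes "m \<le> 3 \<or> n \<le> 2" and "J \<subseteq> {1..n}" and "J \<noteq> {}" and stuck: "\<forall>t\<in>J. \<not> can_elim m A J t"
  shows "\<exists>T s. isolating m A J T s"
  using assms(1)
proof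
  assume "m \<le> 3"
  then obtain T s where T: "T \<subseteq> J" "two_sided_isolating m A T s"
    using two_sided_isolating_subset_if_stuck[OF _ assms(3) stuck] by blast
  then show ?thesis
    using isolating_of_two_sided[OF \<open>m \<le> 3\<close> stuck T] by blast
next
  assume "n \<le> 2"
  then show ?thesis
    using isolating_if_stuck_two_columns[OF _ assms(2,3) stuck] by blast
qed

section \<open>Elimination orderings\<close>

definition elimination_ordering_on :: "nat \<Rightarrow> (nat \<Rightarrow> nat \<Rightarrow> real) \<Rightarrow> nat set \<Rightarrow> nat list \<Rightarrow> bool" where
  "elimination_ordering_on m A J js \<longleftrightarrow>
     distinct js \<and> set js = J \<and> (\<forall>t<length js. can_elim m A (J - set (take t js)) (js ! t))"

lemma elimination_ordering_iff:
  "elimination_ordering m n A js \<longleftrightarrow> elimination_ordering_on m A {1..n} js"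
  unfolding elimination_ordering_def elimination_ordering_on_def
  by (metis card_atLeastAtMost diff_Suc_1 distinct_card)

lemma elimination_ordering_on_Cons:
  assumes "j \<in> J" and "can_elim m A J j" and "elimination_ordering_on m A (J - {j}) js"
  shows "elimination_ordering_on m A J (j # js)"
  unfolding elimination_ordering_on_def
proof (intro conjI allI impI)
  show "distinct (j # js)" "set (j # js) = J"
    using assms by (auto simp: elimination_ordering_on_def)
  fix t
  assume "t < length (j # js)"
  then show "can_elim m A (J - set (take t (j # js))) ((j # js) ! t)"
    using assms by (cases t) (auto simp: elimination_ordering_on_def set_diff_eq)
qed

lemma slice_elimination_ordering:
  assumes d: "d \<ge> 1" and mn: "m \<le> 3 \<or> n \<le> 2"
    and "J \<subseteq> {1..n}" and "\<forall>k\<in>{1..n} - J. c k \<in> {0..int d}"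
    and "\<forall>b. sol_graph_connected n (slice d m n A b J c)"
  shows "\<exists>js. elimination_ordering_on m A J js"
  using assms(3-5)
proof (induction "card J" arbitrary: J c rule: less_induct)
  case less
  consider "J = {}" | j where "j \<in> J" "can_elim m A J j" | "J \<noteq> {}" "\<forall>j\<in>J. \<not> can_elim m A J j"
    by blast
  then show ?case
  proof cases
    case 1
    have "elimination_ordering_on m A {} []"
      by (simp add: elimination_ordering_on_def)
    with 1 show ?thesis
      by blast
  next
    case (2 j)
    obtain v where best: "best_value d m A J j v"
      using can_elim_best_value[OF 2(2)] by blast
    have "card (J - {j}) < card J"
      using 2(1) less.prems(1) by (meson card_Diff1_less finite_atLeastAtMost finite_subset)
    moreover have "\<forall>k\<in>{1..n} - (J - {j}). (c(j := v)) k \<in> {0..int d}"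
      using less.prems(2) best by (auto simp: best_value_def)
    moreover have "\<forall>b. sol_graph_connected n (slice d m n A b (J - {j}) (c(j := v)))"
      using slice_connected_fix_column[OF less.prems(1) 2(1) best] less.prems(3) by blast
    ultimately obtain js where "elimination_ordering_on m A (J - {j}) js"
      using less.hyps less.prems(1) by (meson Diff_subset order_trans)
    then show ?thesis
      using elimination_ordering_on_Cons 2 by blast
  next
    case 3
    then obtain T s where "isolating m A J T s"
      using isolating_if_stuck[OF mn less.prems(1)] by blast
    then show ?thesis
      using slice_not_connected_if_isolating[OF d less.prems(1,2)] less.prems(3) by blast
  qed
qed

theorem theorem2:
  fixes d m n :: nat and A :: "nat \<Rightarrow> nat \<Rightarrow> real"
  assumes "d \<ge> 1"
    and "\<forall>b :: nat \<Rightarrow> real. sol_graph_connected n (solset d m n A b)"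
    and "m \<le> 3 \<or> n \<le> 2"
  shows "\<exists>js. elimination_ordering m n A js"
proof -
  have "\<forall>b. sol_graph_connected n (slice d m n A b {1..n} (\<lambda>_. 0))"
    unfolding slice_all_columns by (rule assms(2))
  then obtain js where "elimination_ordering_on m A {1..n} js"
    using slice_elimination_ordering[OF assms(1,3), of "{1..n}"] by blast
  then show ?thesis
    unfolding elimination_ordering_iff ..
qed

end
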